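(* Let $p$ be a prime, $\tau\in(0,1)$, $\alpha>1/2$, $d\in\mathbb{N}$, and let $\gamma=(\gamma_u)_u$ be weights with $0<\gamma_u\le1$. Then there exists a subset $Z_{p,\tau}\subseteq\{1:p-1\}^d$ with $|Z_{p,\tau}|\ge\lceil\tau(p-1)^d\rceil$ such that every $z\in Z_{p,\tau}$ satisfies $$e^{\rm det}_{d,\alpha,\gamma}(Q_p^z)\le\inf_{1/2\le\lambda<\alpha}\Big(\frac{2}{(1-\tau)(p-1)}V_d(\alpha/\lambda,\gamma^{1/\lambda})\Big)^{\lambda}.$$
   Context: $\{1:m\}:=\{1,\ldots,m\}$. Weights $\gamma=(\gamma_u)_u$ indexed by finite $u\subset\mathbb{N}$, $0<\gamma_u\le1$, $\gamma_\emptyset=1$. For $h\in\mathbb{Z}^d$, $\mathrm{supp}(h)=\{j:h_j\ne0\}$, $r_{d,\alpha,\gamma}(h)=\gamma_{\mathrm{supp}(h)}^{-1}\prod_{j\in\mathrm{supp}(h)}|h_j|^\alpha$. The weighted Korobov space $\mathcal{H}_{d,\alpha,\gamma}$ consists of $f\colon[0,1]^d\to\mathbb{C}$ with absolutely convergent Fourier series and finite norm $\|f\|_{d,\alpha,\gamma}^2=\sum_h r_{d,\alpha,\gamma}(h)^2|\hat f(h)|^2$. $I_d(f)=\int_{[0,1]^d}f$. Lattice rule $Q_p^z(f)=\frac1p\sum_{k=0}^{p-1}f(\{kz/p\})$. $e^{\rm det}_{d,\alpha,\gamma}(Q_p^z)=\sup_{\|f\|_{d,\alpha,\gamma}\le1}|I_d(f)-Q_p^z(f)|$;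 equivalently $e^{\rm det}_{d,\alpha,\gamma}(Q_p^z)^2=\sum_{h\in\mathbb{Z}^d\setminus\{0\},\,h\cdot z\equiv0\ (\mathrm{mod}\ p)}r_{d,\alpha,\gamma}(h)^{-2}$. Notation: $\gamma^{1/\lambda}=(\gamma_u^{1/\lambda})_u$ and for $\beta>1$, $V_d(\beta,\gamma)=\sum_{\emptyset\ne u\subseteq\{1:d\}}\gamma_u(2\zeta(\beta))^{|u|}$, where $\zeta$ is the Riemann zeta function; thus $V_d(\alpha/\lambda,\gamma^{1/\lambda})=\sum_{\emptyset\ne u\subseteq\{1:d\}}\gamma_u^{1/\lambda}(2\zeta(\alpha/\lambda))^{|u|}$. *)

theory Defs
  imports "HOL-Analysis.Analysis"
begin

text \<open>Integer vectors in Z^d are represented as functions nat => int supported in {1..d}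
  (coordinates 1..d, value 0 outside).\<close>

definition intvecs :: "nat \<Rightarrow> (nat \<Rightarrow> int) set" where
  "intvecs d = {h. \<forall>j. j \<notin> {1..d} \<longrightarrow> h j = 0}"

definition supp :: "nat \<Rightarrow> (nat \<Rightarrow> int) \<Rightarrow> nat set" where
  "supp d h = {j \<in> {1..d}. h j \<noteq> 0}"

definition r_weight :: "nat \<Rightarrow> real \<Rightarrow> (nat set \<Rightarrow> real) \<Rightarrow> (nat \<Rightarrow> int) \<Rightarrow> real" where
  "r_weight d \<alpha> \<gamma> h = inverse (\<gamma> (supp d h)) * (\<Prod>j\<in>supp d h. \<bar>real_of_int (h j)\<bar> powr \<alpha>)"

definition dotp :: "nat \<Rightarrow> (nat \<Rightarrow> int) \<Rightarrow> (nat \<Rightarrow> int) \<Rightarrow> int" where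
  "dotp d h z = (\<Sum>j=1..d. h j * z j)"

definition dual_nz :: "nat \<Rightarrow> nat \<Rightarrow> (nat \<Rightarrow> int) \<Rightarrow> (nat \<Rightarrow> int) set" where
  "dual_nz d p z = {h \<in> intvecs d. h \<noteq> (\<lambda>_. 0) \<and> dotp d h z mod int p = 0}"

text \<open>Squared worst-case error e^det_{d,alpha,gamma}(Q_p^z)^2, as an (always defined)
  sum of nonnegative terms in ennreal.\<close>
definition e_det_sq :: "nat \<Rightarrow> real \<Rightarrow> (nat set \<Rightarrow> real) \<Rightarrow> nat \<Rightarrow> (nat \<Rightarrow> int) \<Rightarrow> ennreal" where
  "e_det_sq d \<alpha> \<gamma> p z = (\<Sum>\<^sub>\<infinity> h\<in>dual_nz d p z. ennreal ((r_weight d \<alpha> \<gamma> h) powi (-2)))"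

definition rzeta :: "real \<Rightarrow> real" where
  "rzeta \<beta> = (\<Sum>n. 1 / (real (Suc n)) powr \<beta>)"

definition V :: "nat \<Rightarrow> real \<Rightarrow> (nat set \<Rightarrow> real) \<Rightarrow> real" where
  "V d \<beta> \<gamma> = (\<Sum>u\<in>Pow {1..d} - {{}}. \<gamma> u * (2 * rzeta \<beta>) ^ card u)"

definition genvecs :: "nat \<Rightarrow> nat \<Rightarrow> (nat \<Rightarrow> int) set" where
  "genvecs d p = {z \<in> intvecs d. \<forall>j\<in>{1..d}. 1 \<le> z j \<and> z j \<le> int p - 1}"

end

(*
  Fix 1/2 <= lambda < alpha and put w(h) = r(h)^(-1/lambda). Since 2 lambda >= 1, Jensen's
  inequality gives e(z)^2 = sum of w(h)^(2 lambda) <= (sum of w(h))^(2 lambda), the sums running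
  over the nonzero dual lattice of z. Averaged over all z in {1:p-1}^d, the sum of w(h) is at
  most 2 V/(p-1), where V = V_d(alpha/lambda, gamma^(1/lambda)): a vector h with some h_j prime
  to p lies in the dual lattice of at most a 1/(p-1) fraction of the z (the congruence fixes z_j
  once the other coordinates are chosen), and the vectors h = p h' contribute at most w(h')/p.
  Now let Z consist of the z for which fewer than ceil(tau (p-1)^d) vectors have smaller error.
  Then Z is that large, and each z in Z has error at most that of more than (1-tau)(p-1)^d
  vectors; if it exceeded the bound for some lambda, all of these would have sum of w(h) above
  2 V/((1-tau)(p-1)), contradicting the average bound (Markov's inequality). As Z does not
  depend on lambda, the bound holds for the infimum over lambda.
*)

theory Submission
  imports Defs
begin

lemma sum_powr_le_powr_sum:
  fixes f :: "'a \<Rightarrow> real"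
  assumes "finite F" "\<And>i. i \<in> F \<Longrightarrow> 0 \<le> f i" "1 \<le> t"
  shows "(\<Sum>i\<in>F. f i powr t) \<le> sum f F powr t"
proof (cases "sum f F = 0")
  case True
  then have "\<forall>i\<in>F. f i = 0" using assms sum_nonneg_eq_0_iff by blast
  then show ?thesis by simp
next
  case False
  define S where "S = sum f F"
  have S: "0 < S" using False assms sum_nonneg[of F f] unfolding S_def by fastforce
  have "(\<Sum>i\<in>F. f i powr t) = S powr t * (\<Sum>i\<in>F. (f i / S) powr t)"
    using S assms(2) by (simp add: powr_divide flip: sum_divide_distrib)
  also have "(\<Sum>i\<in>F. (f i / S) powr t) \<le> (\<Sum>i\<in>F. f i / S)"
  proof (rule sum_mono)
    fix i assume i: "i \<in> F"
    have "f i \<le> S" unfolding S_def using assms i by (intro member_le_sum) auto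
    moreover have "0 \<le> f i" using assms(2) i .
    ultimately show "(f i / S) powr t \<le> f i / S"
      using S assms(3) by (cases "f i = 0") (simp_all add: powr_le_one_le)
  qed
  also have "(\<Sum>i\<in>F. f i / S) = 1" using S by (simp add: S_def flip: sum_divide_distrib)
  finally show ?thesis using S by (simp add: S_def)
qed

lemma summable_rzeta: "1 < \<beta> \<Longrightarrow> summable (\<lambda>n. 1 / real (Suc n) powr \<beta>)"
  using summable_real_powr_iff[of "-\<beta>"] summable_Suc_iff[of "\<lambda>n. real n powr (-\<beta>)"]
  by (simp add: powr_minus_divide)

lemma sum_abs_powr_le_rzeta:
  fixes K :: "int set"
  assumes "1 < \<beta>" "finite K" "0 \<notin> K" "inj_on abs K"
  shows "(\<Sum>k\<in>K. \<bar>real_of_int k\<bar> powr (-\<beta>)) \<le> rzeta \<beta>"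
proof -
  define n where "n k = nat \<bar>k\<bar> - 1" for k :: int
  have Suc_n: "real (Suc (n k)) = \<bar>real_of_int k\<bar>" if "k \<in> K" for k
    using that assms(3) unfolding n_def by (cases "k = 0") auto
  have "inj_on n K"
  proof (rule inj_onI)
    fix k l assume "k \<in> K" "l \<in> K" "n k = n l"
    then have "\<bar>k\<bar> = \<bar>l\<bar>" using Suc_n by (metis of_int_abs of_int_eq_iff)
    with \<open>k \<in> K\<close> \<open>l \<in> K\<close> show "k = l" using assms(4) by (auto dest: inj_onD)
  qed
  then have "(\<Sum>k\<in>K. \<bar>real_of_int k\<bar> powr (-\<beta>)) = (\<Sum>m\<in>n ` K. 1 / real (Suc m) powr \<beta>)"
    by (simp add: sum.reindex Suc_n powr_minus_divide del: of_nat_Suc)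
  also have "\<dots> \<le> rzeta \<beta>"
    unfolding rzeta_def using assms(1,2) summable_rzeta by (intro sum_le_suminf) auto
  finally show ?thesis .
qed

lemma sum_abs_powr_le_two_rzeta:
  fixes K :: "int set"
  assumes "1 < \<beta>" "finite K" "0 \<notin> K"
  shows "(\<Sum>k\<in>K. \<bar>real_of_int k\<bar> powr (-\<beta>)) \<le> 2 * rzeta \<beta>"
proof -
  have K: "K = {k\<in>K. 0 < k} \<union> {k\<in>K. k < 0}" using assms(3) by (force simp: not_less less_le)
  have "(\<Sum>k\<in>K. \<bar>real_of_int k\<bar> powr (-\<beta>))
      = (\<Sum>k\<in>{k\<in>K. 0 < k}. \<bar>real_of_int k\<bar> powr (-\<beta>)) + (\<Sum>k\<in>{k\<in>K. k < 0}. \<bar>real_of_int k\<bar> powr (-\<beta>))"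
    using assms(2) by (subst K, subst sum.union_disjoint) auto
  also have "\<dots> \<le> rzeta \<beta> + rzeta \<beta>"
    using assms by (intro add_mono sum_abs_powr_le_rzeta) (auto simp: inj_on_def)
  finally show ?thesis by simp
qed

lemma sum_prod_abs_powr_le:
  fixes H :: "(nat \<Rightarrow> int) set"
  assumes "1 < \<beta>" "finite u" "finite H" "\<And>h j. h \<in> H \<Longrightarrow> j \<in> u \<Longrightarrow> h j \<noteq> 0"
    "inj_on (\<lambda>h. restrict h u) H"
  shows "(\<Sum>h\<in>H. \<Prod>j\<in>u. \<bar>real_of_int (h j)\<bar> powr (-\<beta>)) \<le> (2 * rzeta \<beta>) ^ card u"
proof -
  define g where "g k = \<bar>real_of_int k\<bar> powr (-\<beta>)" for k :: int
  define K where "K = (\<Union>h\<in>H. h ` u)"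
  have K: "finite K" "0 \<notin> K" unfolding K_def using assms(2-4) by force+
  have "(\<Sum>h\<in>H. \<Prod>j\<in>u. g (h j)) = (\<Sum>f\<in>(\<lambda>h. restrict h u) ` H. \<Prod>j\<in>u. g (f j))"
    by (simp add: sum.reindex[OF assms(5)])
  also have "\<dots> \<le> (\<Sum>f\<in>PiE u (\<lambda>_. K). \<Prod>j\<in>u. g (f j))"
    using K assms(2) by (intro sum_mono2 finite_PiE) (auto simp: K_def g_def intro!: prod_nonneg)
  also have "\<dots> = (\<Prod>j\<in>u. \<Sum>k\<in>K. g k)"
    by (rule prod_sum_PiE[symmetric]) (use K assms(2) in auto)
  also have "\<dots> \<le> (\<Prod>j\<in>u. 2 * rzeta \<beta>)"
    using K assms(1) by (intro prod_mono) (auto simp: g_def intro!: sum_nonneg sum_abs_powr_le_two_rzeta)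
  finally show ?thesis unfolding g_def by simp
qed

lemma bij_betw_restrict_genvecs:
  "bij_betw (\<lambda>z. restrict z {1..d}) (genvecs d p) (PiE {1..d} (\<lambda>_. {1..int p - 1}))"
proof (rule bij_betwI')
  fix x y assume x: "x \<in> genvecs d p" and y: "y \<in> genvecs d p"
  show "(restrict x {1..d} = restrict y {1..d}) = (x = y)"
  proof
    assume eq: "restrict x {1..d} = restrict y {1..d}"
    show "x = y"
    proof
      fix j show "x j = y j"
        using fun_cong[OF eq, of j] x y by (cases "j \<in> {1..d}") (auto simp: genvecs_def intvecs_def)
    qed
  qed simp
next
  fix f assume f: "f \<in> PiE {1..d} (\<lambda>_. {1..int p - 1})"
  define z where "z j = (if j \<in> {1..d} then f j else 0)" for j
  have "z \<in> genvecs d p" using f unfolding z_def genvecs_def intvecs_def by auto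
  moreover have "f = restrict z {1..d}" using f unfolding z_def by (auto simp: PiE_def extensional_def)
  ultimately show "\<exists>z\<in>genvecs d p. f = restrict z {1..d}" by blast
qed (auto simp: genvecs_def)

lemma finite_genvecs: "finite (genvecs d p)"
  using bij_betw_finite[OF bij_betw_restrict_genvecs] by (simp add: finite_PiE)

lemma card_genvecs: "card (genvecs d p) = (p - 1) ^ d"
proof -
  have "nat (int p - 1) = p - 1" by (cases p) auto
  then show ?thesis using bij_betw_same_card[OF bij_betw_restrict_genvecs] by (simp add: card_PiE)
qed

lemma dotp_fun_upd:
  assumes "j \<in> {1..d}"
  shows "dotp d h (z(j := a)) = (\<Sum>i\<in>{1..d} - {j}. h i * z i) + h j * a"
  unfolding dotp_def using assms by (subst sum.remove[of _ j]) (auto intro!: sum.cong)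

lemma card_genvecs_dotp_dvd_le:
  assumes "prime p" "j \<in> {1..d}" "\<not> int p dvd h j"
  shows "card {z\<in>genvecs d p. dotp d h z mod int p = 0} * (p - 1) \<le> card (genvecs d p)"
proof -
  define G where "G = genvecs d p"
  define S where "S = {z\<in>G. dotp d h z mod int p = 0}"
  define \<phi> where "\<phi> z = z(j := 0)" for z :: "nat \<Rightarrow> int"
  have z_eq: "z = (\<phi> z)(j := z j)" for z unfolding \<phi>_def by simp
  have "bij_betw (\<lambda>z. (\<phi> z, z j)) G (\<phi> ` G \<times> {1..int p - 1})"
  proof (rule bij_betwI')
    fix x y show "((\<phi> x, x j) = (\<phi> y, y j)) = (x = y)" by (metis z_eq prod.inject)
  next
    fix w assume "w \<in> \<phi> ` G \<times> {1..int p - 1}"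
    then obtain z a where "z \<in> G" "a \<in> {1..int p - 1}" "w = (\<phi> z, a)" by auto
    then show "\<exists>x\<in>G. w = (\<phi> x, x j)"
      using assms(2) by (intro bexI[of _ "z(j := a)"]) (auto simp: \<phi>_def G_def genvecs_def intvecs_def)
  qed (use assms(2) in \<open>auto simp: G_def genvecs_def\<close>)
  then have card_G: "card G = card (\<phi> ` G) * (p - 1)"
    by (simp add: bij_betw_same_card card_cartesian_product nat_diff_distrib')
  have "inj_on \<phi> S"
  proof (rule inj_onI)
    fix x y assume x: "x \<in> S" and y: "y \<in> S" and eq: "\<phi> x = \<phi> y"
    have "dotp d h x - dotp d h y = h j * (x j - y j)"
      using dotp_fun_upd[OF assms(2), of h "\<phi> x" "x j"] dotp_fun_upd[OF assms(2), of h "\<phi> y" "y j"]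
        z_eq[of x] z_eq[of y] eq by (simp add: right_diff_distrib)
    moreover have "int p dvd dotp d h x - dotp d h y" using x y unfolding S_def by (auto intro: dvd_diff)
    ultimately have "int p dvd x j - y j"
      using assms(1,3) by (simp add: prime_dvd_mult_iff)
    moreover have "x j \<in> {1..int p - 1}" "y j \<in> {1..int p - 1}"
      using x y assms(2) unfolding S_def G_def genvecs_def by auto
    ultimately have "x j = y j" by (simp add: mod_eq_dvd_iff[symmetric])
    then show "x = y" using eq z_eq by metis
  qed
  then have "card S = card (\<phi> ` S)" by (simp add: card_image)
  also have "\<dots> \<le> card (\<phi> ` G)" unfolding S_def G_def by (intro card_mono finite_imageI finite_genvecs) auto
  finally have "card S * (p - 1) \<le> card G" using card_G by simp
  then show ?thesis unfolding S_def G_def .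
qed

definition r_weight_inv_root :: "nat \<Rightarrow> real \<Rightarrow> (nat set \<Rightarrow> real) \<Rightarrow> real \<Rightarrow> (nat \<Rightarrow> int) \<Rightarrow> real" where
  "r_weight_inv_root d \<alpha> \<gamma> lam h = r_weight d \<alpha> \<gamma> h powr (-1/lam)"

lemma r_weight_inv_root_nonneg: "0 \<le> r_weight_inv_root d \<alpha> \<gamma> lam h"
  unfolding r_weight_inv_root_def by simp

lemma r_weight_inv_root_eq:
  assumes "0 < \<gamma> (supp d h)"
  shows "r_weight_inv_root d \<alpha> \<gamma> lam h
    = \<gamma> (supp d h) powr (1/lam) * (\<Prod>j\<in>supp d h. \<bar>real_of_int (h j)\<bar> powr (-(\<alpha>/lam)))"
proof -
  have "r_weight_inv_root d \<alpha> \<gamma> lam h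
      = inverse (\<gamma> (supp d h)) powr (-1/lam) * (\<Prod>j\<in>supp d h. \<bar>real_of_int (h j)\<bar> powr \<alpha>) powr (-1/lam)"
    unfolding r_weight_inv_root_def r_weight_def using assms by (subst powr_mult) (auto intro: prod_nonneg)
  also have "inverse (\<gamma> (supp d h)) powr (-1/lam) = \<gamma> (supp d h) powr (1/lam)"
    by (simp add: inverse_powr powr_minus[symmetric])
  also have "(\<Prod>j\<in>supp d h. \<bar>real_of_int (h j)\<bar> powr \<alpha>) powr (-1/lam)
      = (\<Prod>j\<in>supp d h. \<bar>real_of_int (h j)\<bar> powr (-(\<alpha>/lam)))"
    by (subst prod_powr_distrib) (simp_all add: powr_powr)
  finally show ?thesis .
qed

lemma r_weight_pos:
  assumes "0 < \<gamma> (supp d h)"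
  shows "0 < r_weight d \<alpha> \<gamma> h"
  unfolding r_weight_def using assms
  by (intro mult_pos_pos inverse_positive_iff_positive[THEN iffD2] prod_pos) (auto simp: supp_def)

lemma supp_nonempty:
  assumes "h \<in> intvecs d" "h \<noteq> (\<lambda>_. 0)"
  shows "supp d h \<noteq> {}"
proof -
  obtain j where "h j \<noteq> 0" using assms(2) by (auto simp: fun_eq_iff)
  then have "j \<in> supp d h" using assms(1) unfolding supp_def intvecs_def by auto
  then show ?thesis by auto
qed

lemma inj_on_restrict_supp: "inj_on (\<lambda>h. restrict h u) {h\<in>intvecs d. supp d h = u}"
proof (rule inj_onI)
  fix x y assume x: "x \<in> {h\<in>intvecs d. supp d h = u}" and y: "y \<in> {h\<in>intvecs d. supp d h = u}"
    and eq: "restrict x u = restrict y u"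
  show "x = y"
  proof
    fix j show "x j = y j"
      using fun_cong[OF eq, of j] x y by (cases "j \<in> u") (auto simp: supp_def intvecs_def)
  qed
qed

lemma V_nonneg:
  assumes "1 < \<beta>" "\<And>u. 0 \<le> \<gamma> u"
  shows "0 \<le> V d \<beta> \<gamma>"
  unfolding V_def rzeta_def using assms summable_rzeta
  by (intro sum_nonneg mult_nonneg_nonneg zero_le_power) (auto intro: suminf_nonneg)

lemma sum_r_weight_inv_root_le_V:
  assumes "finite F" "F \<subseteq> intvecs d - {\<lambda>_. 0}" "0 < lam" "lam < \<alpha>"
    and \<gamma>_pos: "\<And>u. finite u \<Longrightarrow> 0 < \<gamma> u"
  shows "(\<Sum>h\<in>F. r_weight_inv_root d \<alpha> \<gamma> lam h) \<le> V d (\<alpha>/lam) (\<lambda>u. \<gamma> u powr (1/lam))"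
proof -
  define U where "U = Pow {1..d} - {{}}"
  define F_u where "F_u u = {h\<in>F. supp d h = u}" for u
  have "supp d ` F \<subseteq> U" unfolding U_def using assms(2) supp_nonempty by (auto simp: supp_def)
  then have "(\<Sum>h\<in>F. r_weight_inv_root d \<alpha> \<gamma> lam h) = (\<Sum>u\<in>U. \<Sum>h\<in>F_u u. r_weight_inv_root d \<alpha> \<gamma> lam h)"
    unfolding F_u_def using assms(1) by (intro sum.group[symmetric]) (auto simp: U_def)
  also have "\<dots> \<le> (\<Sum>u\<in>U. \<gamma> u powr (1/lam) * (2 * rzeta (\<alpha>/lam)) ^ card u)"
  proof (rule sum_mono)
    fix u assume "u \<in> U"
    then have u: "finite u" by (auto simp: U_def intro: finite_subset)
    have "(\<Sum>h\<in>F_u u. r_weight_inv_root d \<alpha> \<gamma> lam h)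
        = \<gamma> u powr (1/lam) * (\<Sum>h\<in>F_u u. \<Prod>j\<in>u. \<bar>real_of_int (h j)\<bar> powr (-(\<alpha>/lam)))"
      using \<gamma>_pos[OF u] by (simp add: F_u_def r_weight_inv_root_eq sum_distrib_left)
    also have "\<dots> \<le> \<gamma> u powr (1/lam) * (2 * rzeta (\<alpha>/lam)) ^ card u"
    proof (intro mult_left_mono sum_prod_abs_powr_le)
      show "inj_on (\<lambda>h. restrict h u) (F_u u)"
        using assms(2) by (intro inj_on_subset[OF inj_on_restrict_supp]) (auto simp: F_u_def)
    qed (use assms u in \<open>auto simp: F_u_def supp_def\<close>)
    finally show "(\<Sum>h\<in>F_u u. r_weight_inv_root d \<alpha> \<gamma> lam h)
        \<le> \<gamma> u powr (1/lam) * (2 * rzeta (\<alpha>/lam)) ^ card u" .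
  qed
  also have "\<dots> = V d (\<alpha>/lam) (\<lambda>u. \<gamma> u powr (1/lam))" unfolding V_def U_def by simp
  finally show ?thesis .
qed

lemma r_weight_inv_root_scale_le:
  fixes c :: nat
  assumes "1 \<le> c" "h \<in> intvecs d" "h \<noteq> (\<lambda>_. 0)" "0 < lam" "lam \<le> \<alpha>"
    and \<gamma>_pos: "\<And>u. finite u \<Longrightarrow> 0 < \<gamma> u"
  shows "r_weight_inv_root d \<alpha> \<gamma> lam (\<lambda>j. int c * h j) \<le> r_weight_inv_root d \<alpha> \<gamma> lam h / real c"
proof -
  define u where "u = supp d h"
  define \<beta> where "\<beta> = \<alpha> / lam"
  have supp_eq: "supp d (\<lambda>j. int c * h j) = u" unfolding u_def supp_def using assms(1) by auto
  have \<gamma>u: "0 < \<gamma> u" using \<gamma>_pos by (simp add: u_def supp_def)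
  have "1 \<le> card u" using supp_nonempty[OF assms(2,3)] by (simp add: u_def supp_def Suc_le_eq card_gt_0_iff)
  have "1 \<le> \<beta>" unfolding \<beta>_def using assms(4,5) by simp
  have "real c powr (-\<beta>) \<le> real c powr (-1)" using assms(1) \<open>1 \<le> \<beta>\<close> by (intro powr_mono) auto
  then have c_beta: "real c powr (-\<beta>) \<le> 1 / real c" by (simp add: powr_minus_divide)
  also have "\<dots> \<le> 1" using assms(1) by simp
  finally have "(real c powr (-\<beta>)) ^ card u \<le> real c powr (-\<beta>)"
    using \<open>1 \<le> card u\<close> by (intro power_decreasing[of 1, simplified]) auto
  with c_beta have c_pow: "(real c powr (-\<beta>)) ^ card u \<le> 1 / real c" by linarith
  have "r_weight_inv_root d \<alpha> \<gamma> lam (\<lambda>j. int c * h j)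
      = (real c powr (-\<beta>)) ^ card u * (\<gamma> u powr (1/lam) * (\<Prod>j\<in>u. \<bar>real_of_int (h j)\<bar> powr (-\<beta>)))"
    using \<gamma>u supp_eq by (simp add: r_weight_inv_root_eq \<beta>_def abs_mult powr_mult prod.distrib)
  also have "\<dots> \<le> 1 / real c * (\<gamma> u powr (1/lam) * (\<Prod>j\<in>u. \<bar>real_of_int (h j)\<bar> powr (-\<beta>)))"
    using c_pow by (intro mult_right_mono mult_nonneg_nonneg prod_nonneg) auto
  also have "\<dots> = r_weight_inv_root d \<alpha> \<gamma> lam h / real c"
    using \<gamma>u by (simp add: r_weight_inv_root_eq u_def \<beta>_def)
  finally show ?thesis .
qed

lemma sum_r_weight_inv_root_multiples_le:
  fixes c :: nat
  assumes "1 \<le> c" "finite H" "H \<subseteq> intvecs d - {\<lambda>_. 0}" "\<And>h j. h \<in> H \<Longrightarrow> int c dvd h j"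
    "0 < lam" "lam < \<alpha>" and \<gamma>_pos: "\<And>u. finite u \<Longrightarrow> 0 < \<gamma> u"
  shows "(\<Sum>h\<in>H. r_weight_inv_root d \<alpha> \<gamma> lam h) \<le> V d (\<alpha>/lam) (\<lambda>u. \<gamma> u powr (1/lam)) / real c"
proof -
  define w where "w = r_weight_inv_root d \<alpha> \<gamma> lam"
  define \<delta> where "\<delta> h = (\<lambda>j. h j div int c)" for h :: "nat \<Rightarrow> int"
  have H_eq: "h j = int c * \<delta> h j" if "h \<in> H" for h j
    using assms(4)[OF that] unfolding \<delta>_def by simp
  have \<delta>_H: "\<delta> h \<in> intvecs d - {\<lambda>_. 0}" if "h \<in> H" for h
  proof -
    have h: "h \<in> intvecs d" "h \<noteq> (\<lambda>_. 0)" using that assms(3) by auto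
    then have "\<delta> h \<in> intvecs d" unfolding intvecs_def \<delta>_def by auto
    moreover have "\<delta> h \<noteq> (\<lambda>_. 0)" using h(2) H_eq[OF that] by (auto simp: fun_eq_iff)
    ultimately show ?thesis by simp
  qed
  have "inj_on \<delta> H"
  proof (rule inj_onI)
    fix x y assume x: "x \<in> H" and y: "y \<in> H" and eq: "\<delta> x = \<delta> y"
    show "x = y"
    proof
      fix j show "x j = y j" using H_eq[OF x, of j] H_eq[OF y, of j] eq by simp
    qed
  qed
  have "w h \<le> w (\<delta> h) / real c" if "h \<in> H" for h
  proof -
    have "(\<lambda>j. int c * \<delta> h j) = h" using H_eq[OF that] by (intro ext) simp
    moreover have "w (\<lambda>j. int c * \<delta> h j) \<le> w (\<delta> h) / real c"
      unfolding w_def using \<delta>_H[OF that] assms(1,5,6) \<gamma>_pos by (intro r_weight_inv_root_scale_le) auto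
    ultimately show ?thesis by simp
  qed
  then have "(\<Sum>h\<in>H. w h) \<le> (\<Sum>h\<in>H. w (\<delta> h)) / real c"
    by (simp add: sum_divide_distrib sum_mono)
  also have "\<dots> = (\<Sum>h\<in>\<delta> ` H. w h) / real c" using \<open>inj_on \<delta> H\<close> by (simp add: sum.reindex)
  also have "\<dots> \<le> V d (\<alpha>/lam) (\<lambda>u. \<gamma> u powr (1/lam)) / real c"
    unfolding w_def using assms \<delta>_H by (intro divide_right_mono sum_r_weight_inv_root_le_V) auto
  finally show ?thesis unfolding w_def .
qed

lemma sum_r_weight_inv_root_mult_count_le:
  assumes "prime p" "finite H" "H \<subseteq> intvecs d - {\<lambda>_. 0}" "0 < lam" "lam < \<alpha>"
    and \<gamma>_pos: "\<And>u. finite u \<Longrightarrow> 0 < \<gamma> u"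
  shows "(\<Sum>h\<in>H. r_weight_inv_root d \<alpha> \<gamma> lam h * card {z\<in>genvecs d p. dotp d h z mod int p = 0})
    \<le> 2 * real (card (genvecs d p)) * V d (\<alpha>/lam) (\<lambda>u. \<gamma> u powr (1/lam)) / (real p - 1)"
proof -
  define w where "w = r_weight_inv_root d \<alpha> \<gamma> lam"
  define cnt where "cnt h = real (card {z\<in>genvecs d p. dotp d h z mod int p = 0})" for h
  define N where "N = real (card (genvecs d p))"
  define V' where "V' = V d (\<alpha>/lam) (\<lambda>u. \<gamma> u powr (1/lam))"
  define H0 where "H0 = {h\<in>H. \<forall>j. int p dvd h j}"
  have p: "2 \<le> p" using assms(1) prime_ge_2_nat by blast
  have "0 \<le> V'" unfolding V'_def using assms(4,5) by (intro V_nonneg) auto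
  have cnt_H1: "cnt h \<le> N / (real p - 1)" if h: "h \<in> H - H0" for h
  proof -
    obtain j where j: "\<not> int p dvd h j" using h unfolding H0_def by auto
    then have "j \<in> {1..d}" using h assms(3) unfolding intvecs_def by auto
    with j have "card {z\<in>genvecs d p. dotp d h z mod int p = 0} * (p - 1) \<le> card (genvecs d p)"
      using card_genvecs_dotp_dvd_le[OF assms(1)] by blast
    then have "real (card {z\<in>genvecs d p. dotp d h z mod int p = 0} * (p - 1)) \<le> N"
      unfolding N_def by (simp only: of_nat_le_iff)
    then show ?thesis using p unfolding cnt_def by (simp add: le_divide_eq)
  qed
  have cnt_H0: "cnt h \<le> N" for h
    unfolding cnt_def N_def by (intro of_nat_mono card_mono finite_genvecs) auto
  have "(\<Sum>h\<in>H. w h * cnt h) = (\<Sum>h\<in>H - H0. w h * cnt h) + (\<Sum>h\<in>H0. w h * cnt h)"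
    using assms(2) by (intro sum.subset_diff) (auto simp: H0_def)
  also have "\<dots> \<le> (\<Sum>h\<in>H - H0. w h) * (N / (real p - 1)) + (\<Sum>h\<in>H0. w h) * N"
    using cnt_H1 cnt_H0 unfolding sum_distrib_right
    by (intro add_mono sum_mono mult_left_mono) (auto simp: w_def r_weight_inv_root_nonneg)
  also have "\<dots> \<le> V' * (N / (real p - 1)) + V' / real p * N"
    using assms p unfolding w_def V'_def H0_def N_def
    by (intro add_mono mult_right_mono sum_r_weight_inv_root_le_V sum_r_weight_inv_root_multiples_le) auto
  also have "\<dots> \<le> V' * (N / (real p - 1)) + V' / (real p - 1) * N"
    using p \<open>0 \<le> V'\<close> by (intro add_left_mono mult_right_mono divide_left_mono) (auto simp: N_def)
  finally show ?thesis by (simp add: w_def cnt_def N_def V'_def field_simps)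
qed

lemma sum_sum_dual_r_weight_inv_root_le:
  assumes "prime p" "finite W" "W \<subseteq> genvecs d p"
    and F: "\<And>z. z \<in> W \<Longrightarrow> finite (F z) \<and> F z \<subseteq> dual_nz d p z"
    and "0 < lam" "lam < \<alpha>" "\<And>u. finite u \<Longrightarrow> 0 < \<gamma> u"
  shows "(\<Sum>z\<in>W. \<Sum>h\<in>F z. r_weight_inv_root d \<alpha> \<gamma> lam h)
    \<le> 2 * real (card (genvecs d p)) * V d (\<alpha>/lam) (\<lambda>u. \<gamma> u powr (1/lam)) / (real p - 1)"
proof -
  define w where "w = r_weight_inv_root d \<alpha> \<gamma> lam"
  define H where "H = (\<Union>z\<in>W. F z)"
  define dual where "dual h z \<longleftrightarrow> dotp d h z mod int p = 0" for h z
  have H: "finite H" "H \<subseteq> intvecs d - {\<lambda>_. 0}"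
    using assms(2) F unfolding H_def dual_nz_def by auto
  have "F z \<subseteq> {h\<in>H. dual h z}" if "z \<in> W" for z
    using F[OF that] that unfolding H_def dual_def dual_nz_def by auto
  then have "(\<Sum>z\<in>W. \<Sum>h\<in>F z. w h) \<le> (\<Sum>z\<in>W. \<Sum>h\<in>{h\<in>H. dual h z}. w h)"
    using H(1) by (intro sum_mono sum_mono2) (auto simp: w_def r_weight_inv_root_nonneg)
  also have "\<dots> = (\<Sum>h\<in>H. \<Sum>z\<in>{z\<in>W. dual h z}. w h)"
    by (rule sum.swap_restrict[OF assms(2) H(1)])
  also have "\<dots> \<le> (\<Sum>h\<in>H. w h * card {z\<in>genvecs d p. dual h z})"
  proof (rule sum_mono)
    fix h
    have "finite {z\<in>genvecs d p. dual h z}" by (simp add: finite_genvecs)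
    then have "card {z\<in>W. dual h z} \<le> card {z\<in>genvecs d p. dual h z}"
      using assms(3) by (intro card_mono) auto
    then show "(\<Sum>z\<in>{z\<in>W. dual h z}. w h) \<le> w h * card {z\<in>genvecs d p. dual h z}"
      by (simp add: w_def r_weight_inv_root_nonneg mult_left_mono mult.commute[of "real _"])
  qed
  also have "\<dots> \<le> 2 * real (card (genvecs d p)) * V d (\<alpha>/lam) (\<lambda>u. \<gamma> u powr (1/lam)) / (real p - 1)"
    unfolding w_def dual_def using assms H by (intro sum_r_weight_inv_root_mult_count_le) auto
  finally show ?thesis unfolding w_def .
qed

lemma r_weight_inv_root_powr:
  assumes "0 < r_weight d \<alpha> \<gamma> h" "0 < lam"
  shows "r_weight_inv_root d \<alpha> \<gamma> lam h powr (2 * lam) = r_weight d \<alpha> \<gamma> h powi (-2)"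
proof -
  have "r_weight_inv_root d \<alpha> \<gamma> lam h powr (2 * lam) = r_weight d \<alpha> \<gamma> h powr (-2)"
    using assms by (simp add: r_weight_inv_root_def powr_powr)
  also have "\<dots> = r_weight d \<alpha> \<gamma> h powi (-2)"
    using assms by (simp add: powr_minus power_int_minus)
  finally show ?thesis .
qed

(* Working with finite partial sums of the ennreal sum e_det_sq avoids all summability questions. *)
lemma e_det_sq_gt_imp_finite_sum_gt:
  assumes "ennreal (B powr (2 * lam)) < e_det_sq d \<alpha> \<gamma> p z" "0 \<le> B" "1/2 \<le> lam"
    and \<gamma>_pos: "\<And>u. finite u \<Longrightarrow> 0 < \<gamma> u"
  obtains F where "finite F" "F \<subseteq> dual_nz d p z" "B < (\<Sum>h\<in>F. r_weight_inv_root d \<alpha> \<gamma> lam h)"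
proof -
  define w where "w = r_weight_inv_root d \<alpha> \<gamma> lam"
  have r_pos: "0 < r_weight d \<alpha> \<gamma> h" for h using \<gamma>_pos by (intro r_weight_pos) (simp add: supp_def)
  have "e_det_sq d \<alpha> \<gamma> p z
      = (SUP F\<in>{F. finite F \<and> F \<subseteq> dual_nz d p z}. \<Sum>h\<in>F. ennreal (r_weight d \<alpha> \<gamma> h powi (-2)))"
    unfolding e_det_sq_def by (rule nonneg_infsum_complete) simp
  with assms(1) obtain F where F: "finite F" "F \<subseteq> dual_nz d p z"
    and "ennreal (B powr (2 * lam)) < (\<Sum>h\<in>F. ennreal (r_weight d \<alpha> \<gamma> h powi (-2)))"
    by (auto simp: less_SUP_iff)
  then have "B powr (2 * lam) < (\<Sum>h\<in>F. r_weight d \<alpha> \<gamma> h powi (-2))"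
    by (simp add: ennreal_less_iff power_int_minus)
  also have "\<dots> = (\<Sum>h\<in>F. w h powr (2 * lam))"
    using r_pos assms(3) by (simp add: w_def r_weight_inv_root_powr)
  also have "\<dots> \<le> sum w F powr (2 * lam)"
    using F(1) assms(3) by (intro sum_powr_le_powr_sum) (auto simp: w_def r_weight_inv_root_nonneg)
  finally have less: "B powr (2 * lam) < sum w F powr (2 * lam)" .
  have "B < sum w F"
  proof (rule ccontr)
    assume "\<not> B < sum w F"
    then have "sum w F powr (2 * lam) \<le> B powr (2 * lam)"
      using assms(3) by (intro powr_mono2) (auto simp: w_def r_weight_inv_root_nonneg intro: sum_nonneg)
    with less show False by simp
  qed
  with F show thesis using that unfolding w_def by blast
qed

lemma e_det_sq_le_if_fraction_larger:
  fixes t :: real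
  assumes "prime p" "0 < t" "1/2 \<le> lam" "lam < \<alpha>"
    and \<gamma>_pos: "\<And>u. finite u \<Longrightarrow> 0 < \<gamma> u"
    and W: "W \<subseteq> genvecs d p" "t * card (genvecs d p) < card W"
    and larger: "\<And>z'. z' \<in> W \<Longrightarrow> e_det_sq d \<alpha> \<gamma> p z \<le> e_det_sq d \<alpha> \<gamma> p z'"
  shows "e_det_sq d \<alpha> \<gamma> p z
    \<le> ennreal ((2 / (t * (real p - 1)) * V d (\<alpha>/lam) (\<lambda>u. \<gamma> u powr (1/lam))) powr (2 * lam))"
proof -
  define V' where "V' = V d (\<alpha>/lam) (\<lambda>u. \<gamma> u powr (1/lam))"
  define B where "B = 2 / (t * (real p - 1)) * V'"
  define N where "N = real (card (genvecs d p))"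
  define w where "w = r_weight_inv_root d \<alpha> \<gamma> lam"
  have p: "2 \<le> p" using assms(1) prime_ge_2_nat by blast
  have "0 \<le> V'" unfolding V'_def using assms(3,4) by (intro V_nonneg) auto
  then have "0 \<le> B" unfolding B_def using p assms(2) by simp
  have "e_det_sq d \<alpha> \<gamma> p z \<le> ennreal (B powr (2 * lam))"
  proof (rule ccontr)
    assume "\<not> e_det_sq d \<alpha> \<gamma> p z \<le> ennreal (B powr (2 * lam))"
    then have less: "ennreal (B powr (2 * lam)) < e_det_sq d \<alpha> \<gamma> p z'" if "z' \<in> W" for z'
      using larger[OF that] by (meson less_le_trans not_le)
    have "\<exists>F. finite F \<and> F \<subseteq> dual_nz d p z' \<and> B < sum w F" if z': "z' \<in> W" for z'
    proof -
      obtain F where "finite F" "F \<subseteq> dual_nz d p z'" "B < sum w F"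
        unfolding w_def by (rule e_det_sq_gt_imp_finite_sum_gt[OF less[OF z'] \<open>0 \<le> B\<close> assms(3) \<gamma>_pos])
      then show ?thesis by blast
    qed
    then obtain F where F: "\<And>z'. z' \<in> W \<Longrightarrow> finite (F z') \<and> F z' \<subseteq> dual_nz d p z' \<and> B < sum w (F z')"
      by metis
    have "finite W" using W(1) finite_genvecs by (rule finite_subset)
    have "0 \<le> t * real (card (genvecs d p))" using assms(2) by simp
    then have "W \<noteq> {}" using W(2) by auto
    have "(\<Sum>z\<in>W. B) < (\<Sum>z\<in>W. sum w (F z))"
      using F \<open>finite W\<close> \<open>W \<noteq> {}\<close> by (intro sum_strict_mono) auto
    then have "card W * B < (\<Sum>z\<in>W. sum w (F z))" by simp
    also have "\<dots> \<le> 2 * N * V' / (real p - 1)"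
      unfolding w_def N_def V'_def using assms F W(1) \<open>finite W\<close>
      by (intro sum_sum_dual_r_weight_inv_root_le) auto
    also have "\<dots> = t * N * B" unfolding B_def using p assms(2) by (simp add: field_simps)
    also have "\<dots> \<le> card W * B" using W(2) \<open>0 \<le> B\<close> unfolding N_def by (intro mult_right_mono) auto
    finally show False by simp
  qed
  then show ?thesis unfolding B_def V'_def .
qed

lemma large_subset_with_many_larger_values:
  fixes f :: "'a \<Rightarrow> 'b::linorder" and \<tau> :: real
  assumes "finite G" "\<tau> \<le> 1"
  obtains Z where "Z \<subseteq> G" "nat \<lceil>\<tau> * card G\<rceil> \<le> card Z"
    "\<And>x. x \<in> Z \<Longrightarrow> (1 - \<tau>) * card G < card {y\<in>G. f x \<le> f y}"
proof -
  define K where "K = nat \<lceil>\<tau> * card G\<rceil>"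
  define smaller where "smaller x = {y\<in>G. f y < f x}" for x
  define Z where "Z = {x\<in>G. card (smaller x) < K}"
  have "\<tau> * card G \<le> card G" using mult_right_mono[OF assms(2), of "real (card G)"] by simp
  then have "K \<le> card G" unfolding K_def by (simp add: ceiling_le nat_le_iff)
  have "K \<le> card Z"
  proof (cases "Z = G")
    case False
    then have "G - Z \<noteq> {}" unfolding Z_def by auto
    moreover have fin: "finite (f ` (G - Z))" using assms(1) by simp
    ultimately have "Min (f ` (G - Z)) \<in> f ` (G - Z)" by (intro Min_in) auto
    then obtain x0 where x0: "x0 \<in> G - Z" "f x0 = Min (f ` (G - Z))" by auto
    have x0_min: "f x0 \<le> f x" if "x \<in> G - Z" for x unfolding x0(2) using fin that by (intro Min_le) auto
    have "K \<le> card (smaller x0)" using x0 unfolding Z_def by auto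
    also have "\<dots> \<le> card Z"
      using assms(1) x0_min by (intro card_mono) (auto simp: smaller_def Z_def dest: leD)
    finally show ?thesis .
  qed (use \<open>K \<le> card G\<close> in simp)
  moreover have "(1 - \<tau>) * card G < card {y\<in>G. f x \<le> f y}" if "x \<in> Z" for x
  proof -
    have "card (smaller x) < K" using that unfolding Z_def by simp
    then have "real (card (smaller x)) + 1 \<le> of_int \<lceil>\<tau> * card G\<rceil>" unfolding K_def by linarith
    also have "\<dots> < \<tau> * card G + 1" by linarith
    finally have "real (card (smaller x)) < \<tau> * card G" by simp
    moreover have "card G = card (smaller x) + card {y\<in>G. f x \<le> f y}"
      using assms(1) by (subst card_Un_disjoint[symmetric]) (auto simp: smaller_def intro: arg_cong[of _ _ card])
    ultimately show ?thesis by (simp add: algebra_simps)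
  qed
  ultimately show thesis using that[of Z] unfolding Z_def K_def by blast
qed

lemma le_ennreal_INF_power2:
  fixes f :: "'a \<Rightarrow> real"
  assumes "A \<noteq> {}" "\<And>x. x \<in> A \<Longrightarrow> 0 \<le> f x" "\<And>x. x \<in> A \<Longrightarrow> e \<le> ennreal (f x ^ 2)"
  shows "e \<le> ennreal ((INF x\<in>A. f x) ^ 2)"
proof -
  obtain a where "a \<in> A" using assms(1) by blast
  then have "e \<le> ennreal (f a ^ 2)" by (rule assms(3))
  then have "e \<noteq> top" by (rule neq_top_trans[rotated]) simp
  then obtain r where r: "0 \<le> r" "e = ennreal r" by (cases e) auto
  have "sqrt r \<le> f x" if "x \<in> A" for x
    using assms(2,3)[OF that] r by (simp add: real_le_lsqrt)
  then have "sqrt r \<le> (INF x\<in>A. f x)" using assms(1) by (intro cINF_greatest) auto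
  then have "sqrt r ^ 2 \<le> (INF x\<in>A. f x) ^ 2" using r(1) by (intro power_mono) auto
  then show ?thesis using r by (simp add: ennreal_leI)
qed

theorem mainTheorem2:
  fixes p d :: nat and \<tau> \<alpha> :: real and \<gamma> :: "nat set \<Rightarrow> real"
  assumes "prime p"
    and "0 < \<tau>" and "\<tau> < 1"
    and "\<alpha> > 1/2"
    and "\<gamma> {} = 1"
    and "\<And>u. finite u \<Longrightarrow> 0 < \<gamma> u \<and> \<gamma> u \<le> 1"
  shows "\<exists>Z. Z \<subseteq> genvecs d p \<and>
           card Z \<ge> nat \<lceil>\<tau> * (real p - 1) ^ d\<rceil> \<and>
           (\<forall>z\<in>Z. e_det_sq d \<alpha> \<gamma> p z \<le>
              ennreal ((INF lam\<in>{1/2..<\<alpha>}.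
                 (2 / ((1 - \<tau>) * (real p - 1)) * V d (\<alpha> / lam) (\<lambda>u. \<gamma> u powr (1 / lam))) powr lam) ^ 2))"
proof -
  define G where "G = genvecs d p"
  define e where "e = e_det_sq d \<alpha> \<gamma> p"
  define B where "B lam = 2 / ((1 - \<tau>) * (real p - 1)) * V d (\<alpha> / lam) (\<lambda>u. \<gamma> u powr (1 / lam))" for lam
  have \<gamma>_pos: "\<And>u. finite u \<Longrightarrow> 0 < \<gamma> u" using assms(6) by blast
  have "real (card G) = (real p - 1) ^ d"
    using prime_gt_0_nat[OF assms(1)] by (simp add: G_def card_genvecs)
  moreover obtain Z where Z: "Z \<subseteq> G" "nat \<lceil>\<tau> * card G\<rceil> \<le> card Z"
    and larger: "\<And>z. z \<in> Z \<Longrightarrow> (1 - \<tau>) * card G < card {z'\<in>G. e z \<le> e z'}"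
    using large_subset_with_many_larger_values[of G \<tau> e] finite_genvecs assms(3) unfolding G_def by auto
  moreover have "e z \<le> ennreal ((INF lam\<in>{1/2..<\<alpha>}. B lam powr lam) ^ 2)" if "z \<in> Z" for z
  proof (rule le_ennreal_INF_power2)
    fix lam assume "lam \<in> {1/2..<\<alpha>}"
    then have "e z \<le> ennreal (B lam powr (2 * lam))"
      using assms(1,3) \<gamma>_pos larger[OF that] unfolding e_def B_def G_def
      by (intro e_det_sq_le_if_fraction_larger
          [where W = "{z'\<in>genvecs d p. e_det_sq d \<alpha> \<gamma> p z \<le> e_det_sq d \<alpha> \<gamma> p z'}"]) auto
    then show "e z \<le> ennreal ((B lam powr lam) ^ 2)" by (simp add: power2_eq_square flip: powr_add)
  qed (use assms(4) in auto)
  ultimately show ?thesis unfolding G_def e_def B_def by auto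
qed

end
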